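(* Consider a qubit dynamics $\{\Lambda_t\}_{t\ge0}$ (Pauli dynamical map) whose states $\rho(t)=\Lambda_t[\rho(0)]$ satisfy the time-local master equation $$\frac{\mathrm{d}}{\mathrm{d}t}\rho(t)=\frac12\sum_{k=1}^3\gamma_k(t)\big(\sigma_k\rho(t)\sigma_k-\rho(t)\big)$$ with real rates $\gamma_k(t)$, and suppose it also satisfies $\frac{\mathrm{d}}{\mathrm{d}t}\Lambda_t=\int_0^t\mathrm{d}\tau\,\mathcal{K}^{\mathrm{NZ}}_{t-\tau}\Lambda_\tau$ for a memory kernel $\mathcal{K}^{\mathrm{NZ}}_t$. The time-local generator has eigenvalues $m^{\mathrm{TCL}}_k(t)=-(\gamma_i(t)+\gamma_j(t))$ for $\{i,j,k\}=\{1,2,3\}$ (on the eigenvectors $\sigma_k$) and $0$ (on $\mathds{1}$); let $G_\alpha(t)=\frac{\mathrm{d}}{\mathrm{d}t}\exp\!\left(\int_0^t m^{\mathrm{TCL}}_\alpha(\tau)\mathrm{d}\tau\right)$ and assume $|\widetilde{G_\alpha}(u)|<1$ for all $\alpha$. Let $\{\Lambda^{\mathrm{Red}}_t\}$ be the solution of $\frac{\mathrm{d}}{\mathrm{d}t}\Lambda^{\mathrm{Red}}_t=\mathcal{K}^{\mathrm{Red}}_t\Lambda^{\mathrm{Red}}_t$, $\Lambda^{\mathrm{Red}}_0=\mathds{1}$, with $\mathcal{K}^{\mathrm{Red}}_t=\int_0^t\mathrm{d}\tau\,\mathcal{K}^{\mathrm{NZ}}_\tau$. If $\{\Lambda_t\}$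 is P-divisible, then $\{\Lambda^{\mathrm{Red}}_t\}$ is also P-divisible.
   Context: $\sigma_1,\sigma_2,\sigma_3$ are the Pauli matrices. A family of maps $\{\Lambda_t\}_{t\ge0}$ is P-divisible if for all $t\ge s\ge0$ one can write $\Lambda_t=V_{t,s}\Lambda_s$ with $V_{t,s}$ a positive trace-preserving map. $\widetilde{G_\alpha}(u)$ is the Laplace transform of $G_\alpha$. *)

theory Defs
  imports "HOL-Analysis.Analysis"
begin

type_synonym qop = "complex^2^2"
type_synonym qmap = "qop \<Rightarrow> qop"

definition pauli :: "nat \<Rightarrow> qop" where
  "pauli k = (if k = 1 then (\<chi> i j. if i = j then 0 else 1)
     else if k = 2 then (\<chi> i j. if i = j then 0 else if i = 0 then - \<i> else \<i>)
     else if k = 3 then (\<chi> i j. if i = j then (if i = 0 then 1 else -1) else 0)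
     else mat 1)"

definition cscale :: "complex \<Rightarrow> qop \<Rightarrow> qop" where
  "cscale c A = (\<chi> i j. c * A $ i $ j)"

definition qtrace :: "qop \<Rightarrow> complex" where
  "qtrace A = (\<Sum>i\<in>UNIV. A $ i $ i)"

definition qform :: "qop \<Rightarrow> complex^2 \<Rightarrow> complex" where
  "qform A x = (\<Sum>i\<in>UNIV. \<Sum>j\<in>UNIV. cnj (x $ i) * A $ i $ j * x $ j)"

definition psd :: "qop \<Rightarrow> bool" where
  "psd A \<longleftrightarrow> (\<forall>x. qform A x \<in> \<real> \<and> 0 \<le> Re (qform A x))"

definition qlinear :: "qmap \<Rightarrow> bool" where
  "qlinear V \<longleftrightarrow> (\<forall>A B. V (A + B) = V A + V B) \<and> (\<forall>c A. V (cscale c A) = cscale c (V A))"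

definition positive_map :: "qmap \<Rightarrow> bool" where
  "positive_map V \<longleftrightarrow> (\<forall>A. psd A \<longrightarrow> psd (V A))"

definition trace_preserving :: "qmap \<Rightarrow> bool" where
  "trace_preserving V \<longleftrightarrow> (\<forall>A. qtrace (V A) = qtrace A)"

definition P_divisible :: "(real \<Rightarrow> qmap) \<Rightarrow> bool" where
  "P_divisible \<Lambda> \<longleftrightarrow> (\<forall>t s. 0 \<le> s \<and> s \<le> t \<longrightarrow>
      (\<exists>V. qlinear V \<and> positive_map V \<and> trace_preserving V \<and> \<Lambda> t = V \<circ> \<Lambda> s))"

definition LTCL :: "(nat \<Rightarrow> real \<Rightarrow> real) \<Rightarrow> real \<Rightarrow> qmap" where
  "LTCL \<gamma> t \<rho> = (\<Sum>k\<in>{1,2,3}. (\<gamma> k t / 2) *\<^sub>R (pauli k ** \<rho> ** pauli k - \<rho>))"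

text \<open>Eigenvalues of the TCL generator: index 0 for the identity, k for \<open>\<sigma>_k\<close>.\<close>
definition mTCL :: "(nat \<Rightarrow> real \<Rightarrow> real) \<Rightarrow> nat \<Rightarrow> real \<Rightarrow> real" where
  "mTCL \<gamma> \<alpha> t = (if \<alpha> = 1 then - (\<gamma> 2 t + \<gamma> 3 t)
      else if \<alpha> = 2 then - (\<gamma> 1 t + \<gamma> 3 t)
      else if \<alpha> = 3 then - (\<gamma> 1 t + \<gamma> 2 t) else 0)"

definition Gfun :: "(nat \<Rightarrow> real \<Rightarrow> real) \<Rightarrow> nat \<Rightarrow> real \<Rightarrow> real" where
  "Gfun \<gamma> \<alpha> t = deriv (\<lambda>s. exp (integral {0..s} (mTCL \<gamma> \<alpha>))) t"

definition laplace :: "(real \<Rightarrow> real) \<Rightarrow> real \<Rightarrow> real" where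
  "laplace f u = integral {0..} (\<lambda>t. exp (- u * t) * f t)"

definition KRed :: "(real \<Rightarrow> qmap) \<Rightarrow> real \<Rightarrow> qmap" where
  "KRed K t \<rho> = integral {0..t} (\<lambda>\<tau>. K \<tau> \<rho>)"

end

theory Submission
  imports Defs
begin

text \<open>All maps involved are diagonal in the Pauli basis. The solution of the time-local equation is
  \<open>\<Lambda>\<^sub>t = diag(1, \<mu>\<^sub>1(t), \<mu>\<^sub>2(t), \<mu>\<^sub>3(t))\<close> with \<open>\<mu>\<^sub>k = exp \<integral> m\<^sub>k\<close>, and a Pauli-diagonal
  family with positive eigenvalues is P-divisible iff every \<open>\<mu>\<^sub>k\<close> is nonincreasing.
  Applied to \<open>\<sigma>\<^sub>a\<close> and read in the coordinate \<open>\<sigma>\<^sub>b\<close>, the Nakajima-Zwanzig equation says that the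
  kernel coordinates \<open>k\<^sub>a\<^sub>b\<close> satisfy \<open>\<integral>\<^sub>0\<^sup>t \<mu>\<^sub>a(\<tau>) k\<^sub>a\<^sub>b(t - \<tau>) d\<tau> = \<delta>\<^sub>a\<^sub>b \<mu>\<^sub>a'(t)\<close>.
  Integration by parts turns this into a Volterra equation for \<open>\<integral>\<^sub>0\<^sup>t k\<^sub>a\<^sub>b\<close> with kernel
  \<open>\<mu>\<^sub>a' \<le> 0\<close>; its solution vanishes off the diagonal and is nonpositive on it. So
  \<open>K\<^sup>R\<^sup>e\<^sup>d\<^sub>t\<close> is Pauli-diagonal with nonpositive eigenvalues, and the reduced dynamics has
  nonincreasing eigenvalues.

  The Laplace-transform hypothesis only serves, in the paper, to guarantee that the memory
  kernel exists.\<close>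

section \<open>Pauli coordinates\<close>

lemma sum_UNIV_2: "sum f (UNIV::2 set) = f 0 + f 1"
proof -
  have "(2::2) = 0" by simp
  then show ?thesis by (simp only: sum_2) (simp add: add.commute)
qed

lemma all_2: "(\<forall>i::2. P i) \<longleftrightarrow> P 0 \<and> P 1"
  by (metis exhaust_2 one_neq_zero)

lemma qop_eq_iff:
  "(A::qop) = B \<longleftrightarrow> A$0$0 = B$0$0 \<and> A$0$1 = B$0$1 \<and> A$1$0 = B$1$0 \<and> A$1$1 = B$1$1"
  by (auto simp: vec_eq_iff all_2)

lemma atMost_3: "{..3::nat} = {0,1,2,3}"
  by auto

lemma le_3_cases: "(b::nat) \<le> 3 \<Longrightarrow> b = 0 \<or> b = 1 \<or> b = 2 \<or> b = 3"
  by auto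

definition pauli_coord :: "nat \<Rightarrow> qop \<Rightarrow> complex" where
  "pauli_coord b A = qtrace (pauli b ** A) / 2"

lemma pauli_coord_explicit:
  "pauli_coord 0 A = (A$0$0 + A$1$1) / 2"
  "pauli_coord (Suc 0) A = (A$0$1 + A$1$0) / 2"
  "pauli_coord 2 A = \<i> * (A$0$1 - A$1$0) / 2"
  "pauli_coord 3 A = (A$0$0 - A$1$1) / 2"
  by (simp_all add: pauli_coord_def qtrace_def pauli_def matrix_matrix_mult_def sum_UNIV_2
      mat_def field_simps)

lemma qtrace_eq_pauli_coord: "qtrace A = 2 * pauli_coord 0 A"
  by (simp add: pauli_coord_explicit qtrace_def sum_UNIV_2)

lemma pauli_coord_add: "pauli_coord b (A + B) = pauli_coord b A + pauli_coord b B"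
  by (simp add: pauli_coord_def qtrace_def matrix_add_ldistrib sum.distrib add_divide_distrib)

lemma pauli_coord_cscale: "pauli_coord b (cscale c A) = c * pauli_coord b A"
  by (simp add: pauli_coord_def qtrace_def cscale_def matrix_matrix_mult_def sum_distrib_left
      algebra_simps)

lemma cscale_of_real: "cscale (of_real r) A = r *\<^sub>R A"
  by (simp add: qop_eq_iff cscale_def vec_eq_iff) (simp add: scaleR_conv_of_real)

lemma pauli_coord_scaleR: "pauli_coord b (r *\<^sub>R A) = of_real r * pauli_coord b A"
  by (simp flip: cscale_of_real add: pauli_coord_cscale)

lemma bounded_linear_pauli_coord: "bounded_linear (pauli_coord b)"
proof -
  have "r *\<^sub>R z = of_real r * z" for r and z :: complex
    by (fact scaleR_conv_of_real)
  then show ?thesis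
    unfolding linear_conv_bounded_linear[symmetric]
    by (intro linearI) (simp_all add: pauli_coord_add pauli_coord_scaleR)
qed

lemma pauli_coord_diff: "pauli_coord b (A - B) = pauli_coord b A - pauli_coord b B"
  by (rule linear_diff[OF bounded_linear.linear[OF bounded_linear_pauli_coord]])

lemma pauli_coord_pauli:
  assumes "a \<le> 3" "b \<le> 3"
  shows "pauli_coord b (pauli a) = (if b = a then 1 else 0)"
  using le_3_cases[OF assms(1)] le_3_cases[OF assms(2)]
  by (elim disjE) (simp_all add: pauli_coord_def qtrace_def pauli_def matrix_matrix_mult_def
      sum_UNIV_2 mat_def)

lemma pauli_expansion: "A = (\<Sum>b\<le>3. cscale (pauli_coord b A) (pauli b))"
  by (simp add: qop_eq_iff pauli_coord_explicit atMost_3 cscale_def pauli_def mat_def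
      field_simps)

lemma qop_eqI_pauli_coord:
  assumes "\<And>b. b \<le> 3 \<Longrightarrow> pauli_coord b A = pauli_coord b B"
  shows "A = B"
  by (subst (1 2) pauli_expansion) (simp add: assms)

lemma qlinear_scaleR: "qlinear V \<Longrightarrow> V (r *\<^sub>R A) = r *\<^sub>R V A"
  by (simp add: qlinear_def flip: cscale_of_real)

lemma pauli_coord_qlinear:
  assumes "qlinear V"
  shows "pauli_coord b (V A) = (\<Sum>a\<le>3. pauli_coord a A * pauli_coord b (V (pauli a)))"
proof -
  have "pauli_coord b (V A) = pauli_coord b (\<Sum>a\<le>3. V (cscale (pauli_coord a A) (pauli a)))"
    using assms by (subst pauli_expansion) (simp add: atMost_3 qlinear_def)
  then show ?thesis
    using assms by (simp add: atMost_3 qlinear_def pauli_coord_add pauli_coord_cscale)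
qed

lemma pauli_coord_conj_pauli:
  "k \<in> {1,2,3} \<Longrightarrow> b \<le> 3 \<Longrightarrow>
   pauli_coord b (pauli k ** A ** pauli k) = (if b = 0 \<or> b = k then 1 else -1) * pauli_coord b A"
  by (auto dest!: le_3_cases simp: pauli_coord_def qtrace_def pauli_def matrix_matrix_mult_def
      sum_UNIV_2 mat_def field_simps)

definition pauli_diag :: "(nat \<Rightarrow> real) \<Rightarrow> qmap" where
  "pauli_diag c A = (\<Sum>b\<le>3. cscale (of_real (c b) * pauli_coord b A) (pauli b))"

lemma pauli_coord_pauli_diag:
  assumes "b \<le> 3"
  shows "pauli_coord b (pauli_diag c A) = of_real (c b) * pauli_coord b A"
  using le_3_cases[OF assms]
  by (auto simp: pauli_diag_def atMost_3 pauli_coord_add pauli_coord_cscale pauli_coord_pauli)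

lemma pauli_diag_pauli: "a \<le> 3 \<Longrightarrow> pauli_diag c (pauli a) = c a *\<^sub>R pauli a"
  by (rule qop_eqI_pauli_coord) (simp add: pauli_coord_pauli_diag pauli_coord_scaleR pauli_coord_pauli)

lemma qlinear_pauli_diag: "qlinear (pauli_diag c)"
  unfolding qlinear_def
  by (intro conjI allI; rule qop_eqI_pauli_coord)
    (simp_all add: pauli_coord_pauli_diag pauli_coord_add pauli_coord_cscale algebra_simps)

lemma trace_preserving_pauli_diag: "c 0 = 1 \<Longrightarrow> trace_preserving (pauli_diag c)"
  by (simp add: trace_preserving_def qtrace_eq_pauli_coord pauli_coord_pauli_diag)

lemma pauli_diag_pauli_diag: "pauli_diag c (pauli_diag d A) = pauli_diag (\<lambda>b. c b * d b) A"
  by (rule qop_eqI_pauli_coord) (simp add: pauli_coord_pauli_diag)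

lemma LTCL_eq_pauli_diag: "LTCL \<gamma> t = pauli_diag (\<lambda>b. mTCL \<gamma> b t)"
proof (intro ext qop_eqI_pauli_coord)
  fix A and b :: nat
  assume "b \<le> 3"
  then show "pauli_coord b (LTCL \<gamma> t A) = pauli_coord b (pauli_diag (\<lambda>b. mTCL \<gamma> b t) A)"
    by (auto dest!: le_3_cases simp: LTCL_def pauli_coord_pauli_diag pauli_coord_add pauli_coord_diff
        pauli_coord_scaleR pauli_coord_conj_pauli mTCL_def field_simps)
qed

section \<open>Positive Pauli-diagonal maps and P-divisibility\<close>

lemma qform_add: "qform (A + B) x = qform A x + qform B x"
  by (simp add: qform_def sum_UNIV_2 algebra_simps)

lemma qform_scaleR: "qform (r *\<^sub>R A) x = of_real r * qform A x"
  by (simp add: qform_def sum_UNIV_2 vec_eq_iff) (simp add: scaleR_conv_of_real algebra_simps)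

lemma psd_add: "psd A \<Longrightarrow> psd B \<Longrightarrow> psd (A + B)"
  by (simp add: psd_def qform_add)

lemma psd_scaleR: "psd A \<Longrightarrow> 0 \<le> r \<Longrightarrow> psd (r *\<^sub>R A)"
  by (simp add: psd_def qform_scaleR)

lemma psdI_of_real: "(\<And>x. \<exists>r\<ge>0. qform A x = of_real r) \<Longrightarrow> psd A"
  unfolding psd_def by (metis Re_complex_of_real Reals_of_real)

lemma pauli_flip_eq:
  "pauli_diag (\<lambda>b. if b = 1 then -1 else 1) A = (\<chi> i j. if i = j then A$i$j else - A$j$i)"
  "pauli_diag (\<lambda>b. if b = 2 then -1 else 1) A = (\<chi> i j. A$j$i)"
  "pauli_diag (\<lambda>b. if b = 3 then -1 else 1) A = (\<chi> i j. if i = j then A$(1-i)$(1-j) else A$i$j)"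
  by (simp_all add: qop_eq_iff pauli_diag_def atMost_3 pauli_coord_explicit cscale_def pauli_def
      mat_def field_simps)

text \<open>Flipping the sign of one Pauli coordinate is an antiunitary conjugation (for \<open>\<sigma>\<^sub>2\<close> the
  transpose), so it preserves positivity although it is not completely positive.\<close>
lemma psd_pauli_flip:
  assumes "k \<in> {1,2,3}" "psd A"
  shows "psd (pauli_diag (\<lambda>b. if b = k then -1 else 1) A)"
proof -
  have "\<exists>y. qform (pauli_diag (\<lambda>b. if b = k then -1 else 1) A) x = qform A y" for x
  proof -
    from assms(1) consider "k = 1" | "k = 2" | "k = 3" by blast
    then show ?thesis
    proof cases
      case 1
      show ?thesis
        unfolding 1 pauli_flip_eq
        by (rule exI[of _ "\<chi> i. if i = 0 then cnj (x$0) else - cnj (x$1)"])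
          (simp add: qform_def sum_UNIV_2 algebra_simps)
    next
      case 2
      show ?thesis
        unfolding 2 pauli_flip_eq
        by (rule exI[of _ "\<chi> i. cnj (x$i)"])
          (simp add: qform_def sum_UNIV_2 algebra_simps)
    next
      case 3
      show ?thesis
        unfolding 3 pauli_flip_eq
        by (rule exI[of _ "\<chi> i. if i = 0 then cnj (x$1) else cnj (x$0)"])
          (simp add: qform_def sum_UNIV_2 algebra_simps)
    qed
  qed
  then show ?thesis
    using assms(2) unfolding psd_def by metis
qed

lemma psd_pauli_diag_single:
  assumes "k \<in> {1,2,3}" "\<bar>m\<bar> \<le> 1" "psd A"
  shows "psd (pauli_diag (\<lambda>b. if b = k then m else 1) A)"
proof -
  have "pauli_diag (\<lambda>b. if b = k then m else 1) A =
      ((1 + m) / 2) *\<^sub>R A + ((1 - m) / 2) *\<^sub>R pauli_diag (\<lambda>b. if b = k then -1 else 1) A"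
    by (rule qop_eqI_pauli_coord)
      (simp add: pauli_coord_pauli_diag pauli_coord_add pauli_coord_scaleR field_simps)
  then show ?thesis
    using assms by (auto intro!: psd_add psd_scaleR psd_pauli_flip)
qed

lemma positive_map_pauli_diag:
  assumes "c 0 = 1" "\<forall>k\<in>{1,2,3}. \<bar>c k\<bar> \<le> 1"
  shows "positive_map (pauli_diag c)"
proof -
  have "pauli_diag c A = pauli_diag (\<lambda>b. if b = 1 then c 1 else 1)
      (pauli_diag (\<lambda>b. if b = 2 then c 2 else 1) (pauli_diag (\<lambda>b. if b = 3 then c 3 else 1) A))"
    for A
    by (rule qop_eqI_pauli_coord) (auto dest!: le_3_cases simp: pauli_coord_pauli_diag assms(1))
  then show ?thesis
    unfolding positive_map_def using assms(2) by (simp add: psd_pauli_diag_single)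
qed

lemma psd_id_add_pauli:
  assumes "k \<in> {1,2,3}"
  shows "psd (mat 1 + pauli k)"
proof (rule psdI_of_real)
  fix x :: "complex^2"
  have norm_sq: "z * cnj z = of_real ((cmod z)\<^sup>2)" for z
    by (fact complex_norm_square[symmetric])
  from assms consider "k = 1" | "k = 2" | "k = 3" by blast
  then show "\<exists>r\<ge>0. qform (mat 1 + pauli k) x = of_real r"
  proof cases
    case 1
    have "qform (mat 1 + pauli k) x = (x$0 + x$1) * cnj (x$0 + x$1)"
      by (simp add: 1 qform_def sum_UNIV_2 pauli_def mat_def algebra_simps)
    then show ?thesis by (metis norm_sq zero_le_power2)
  next
    case 2
    have "qform (mat 1 + pauli k) x = (x$0 - \<i> * x$1) * cnj (x$0 - \<i> * x$1)"
      by (simp add: 2 qform_def sum_UNIV_2 pauli_def mat_def algebra_simps)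
    then show ?thesis by (metis norm_sq zero_le_power2)
  next
    case 3
    have "qform (mat 1 + pauli k) x = of_real 2 * (x$0 * cnj (x$0))"
      by (simp add: 3 qform_def sum_UNIV_2 pauli_def mat_def algebra_simps)
    then show ?thesis by (metis norm_sq of_real_mult zero_le_power2 zero_le_numeral mult_nonneg_nonneg)
  qed
qed

lemma psd_id_add_pauli_le:
  assumes "k \<in> {1,2,3}" "psd (mat 1 + r *\<^sub>R pauli k)"
  shows "r \<le> 1"
proof -
  have "\<exists>x c. 0 < c \<and> Re (qform (mat 1 + r *\<^sub>R pauli k) x) = c * (1 - r)"
  proof -
    from assms(1) consider "k = 1" | "k = 2" | "k = 3" by blast
    then show ?thesis
    proof cases
      case 1
      show ?thesis
        by (intro exI[of _ "\<chi> i. if i = 0 then 1 else -1"] exI[of _ 2])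
          (simp add: 1 qform_def sum_UNIV_2 pauli_def mat_def)
    next
      case 2
      show ?thesis
        by (intro exI[of _ "\<chi> i. if i = 0 then 1 else - \<i>"] exI[of _ 2])
          (simp add: 2 qform_def sum_UNIV_2 pauli_def mat_def)
    next
      case 3
      show ?thesis
        by (intro exI[of _ "\<chi> i. if i = 0 then 0 else 1"] exI[of _ 1])
          (simp add: 3 qform_def sum_UNIV_2 pauli_def mat_def)
    qed
  qed
  then show ?thesis
    using assms(2) unfolding psd_def by (metis diff_ge_0_iff_ge zero_le_mult_iff not_less)
qed

lemma pauli_diag_id_add_pauli:
  assumes "c 0 = 1" "k \<in> {1,2,3}"
  shows "pauli_diag c (mat 1 + r *\<^sub>R pauli k) = mat 1 + (c k * r) *\<^sub>R pauli k"
proof -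
  have "mat 1 = pauli 0" by (simp add: pauli_def)
  then show ?thesis
    using assms by (intro qop_eqI_pauli_coord)
      (auto simp: pauli_coord_pauli_diag pauli_coord_add pauli_coord_scaleR pauli_coord_pauli)
qed

lemma antimono_if_P_divisible_pauli_diag:
  assumes \<Lambda>: "\<And>t. 0 \<le> t \<Longrightarrow> \<Lambda> t = pauli_diag (\<lambda>b. \<mu> b t)"
    and trace: "\<And>t. 0 \<le> t \<Longrightarrow> \<mu> 0 t = 1"
    and pos: "\<And>b t. 0 \<le> t \<Longrightarrow> 0 < \<mu> b t"
    and "P_divisible \<Lambda>" "k \<in> {1,2,3}" "0 \<le> s" "s \<le> t"
  shows "\<mu> k t \<le> \<mu> k s"
proof -
  obtain V where V: "positive_map V" "\<Lambda> t = V \<circ> \<Lambda> s"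
    using assms(4,6,7) unfolding P_divisible_def by blast
  txt \<open>\<open>\<Lambda> s\<close> maps \<open>\<rho>\<close> to the positive operator \<open>1 + \<sigma>\<^sub>k\<close>, so \<open>\<Lambda> t \<rho> = V (1 + \<sigma>\<^sub>k)\<close> is positive.\<close>
  define \<rho> where "\<rho> = mat 1 + (1 / \<mu> k s) *\<^sub>R pauli k"
  have "\<Lambda> s \<rho> = mat 1 + (\<mu> k s * (1 / \<mu> k s)) *\<^sub>R pauli k"
    unfolding \<rho>_def \<Lambda>[OF \<open>0 \<le> s\<close>] using assms(5,6) by (intro pauli_diag_id_add_pauli) (simp_all add: trace)
  also have "\<dots> = mat 1 + pauli k"
    using pos[of s k] \<open>0 \<le> s\<close> by simp
  finally have "psd (\<Lambda> t \<rho>)"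
    using V psd_id_add_pauli[OF \<open>k \<in> {1,2,3}\<close>] by (simp add: positive_map_def)
  moreover have "\<Lambda> t \<rho> = mat 1 + (\<mu> k t * (1 / \<mu> k s)) *\<^sub>R pauli k"
    unfolding \<rho>_def \<Lambda>[OF order.trans[OF \<open>0 \<le> s\<close> \<open>s \<le> t\<close>]] using assms(5-7)
    by (intro pauli_diag_id_add_pauli) (simp_all add: trace)
  ultimately have "\<mu> k t / \<mu> k s \<le> 1"
    using psd_id_add_pauli_le[OF \<open>k \<in> {1,2,3}\<close>] by simp
  then show ?thesis
    using pos[of s k] \<open>0 \<le> s\<close> by (simp add: divide_le_eq)
qed

lemma P_divisible_pauli_diag:
  assumes \<Lambda>: "\<And>t. 0 \<le> t \<Longrightarrow> \<Lambda> t = pauli_diag (\<lambda>b. \<mu> b t)"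
    and trace: "\<And>t. 0 \<le> t \<Longrightarrow> \<mu> 0 t = 1"
    and pos: "\<And>b t. 0 \<le> t \<Longrightarrow> 0 < \<mu> b t"
    and antimono: "\<And>k s t. k \<in> {1,2,3} \<Longrightarrow> 0 \<le> s \<Longrightarrow> s \<le> t \<Longrightarrow> \<mu> k t \<le> \<mu> k s"
  shows "P_divisible \<Lambda>"
  unfolding P_divisible_def
proof (intro allI impI)
  fix s t :: real
  assume st: "0 \<le> s \<and> s \<le> t"
  define V where "V = pauli_diag (\<lambda>b. \<mu> b t / \<mu> b s)"
  have "\<bar>\<mu> k t / \<mu> k s\<bar> \<le> 1" if "k \<in> {1,2,3}" for k
    using antimono[OF that] st pos[of s k] pos[of t k] by (simp add: abs_le_iff divide_le_eq)
  then have "positive_map V"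
    unfolding V_def using st by (intro positive_map_pauli_diag) (simp_all add: trace)
  moreover have "trace_preserving V"
    unfolding V_def using st by (intro trace_preserving_pauli_diag) (simp add: trace)
  moreover have "(\<lambda>b. \<mu> b t / \<mu> b s * \<mu> b s) = (\<lambda>b. \<mu> b t)"
    using st pos[of s] by (simp add: fun_eq_iff less_imp_neq[symmetric])
  then have "\<Lambda> t = V \<circ> \<Lambda> s"
    using st by (simp add: V_def \<Lambda> fun_eq_iff pauli_diag_pauli_diag)
  ultimately show "\<exists>V. qlinear V \<and> positive_map V \<and> trace_preserving V \<and> \<Lambda> t = V \<circ> \<Lambda> s"
    using qlinear_pauli_diag V_def by blast
qed

section \<open>Integration by parts against an integrable function\<close>

lemma has_real_derivative_zeroI:
  fixes f :: "real \<Rightarrow> real"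
  assumes "\<And>e. e > 0 \<Longrightarrow> \<exists>d>0. \<forall>y\<in>S. y \<noteq> x \<and> \<bar>y - x\<bar> < d \<longrightarrow> \<bar>f y - f x\<bar> \<le> e * \<bar>y - x\<bar>"
  shows "(f has_real_derivative 0) (at x within S)"
  unfolding has_field_derivative_iff
proof (rule tendstoI)
  fix e :: real
  assume "e > 0"
  then obtain d where "d > 0" and d: "\<forall>y\<in>S. y \<noteq> x \<and> \<bar>y - x\<bar> < d \<longrightarrow> \<bar>f y - f x\<bar> \<le> e/2 * \<bar>y - x\<bar>"
    using assms[of "e/2"] by auto
  have "dist ((f y - f x) / (y - x)) 0 < e" if "y \<in> S" "y \<noteq> x" "dist y x < d" for y
  proof -
    have "\<bar>f y - f x\<bar> / \<bar>y - x\<bar> \<le> e/2"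
      using d that by (simp add: dist_real_def divide_le_eq)
    moreover have "dist ((f y - f x) / (y - x)) 0 = \<bar>f y - f x\<bar> / \<bar>y - x\<bar>"
      by (simp add: dist_real_def abs_divide)
    ultimately show ?thesis
      using \<open>e > 0\<close> by linarith
  qed
  then show "\<forall>\<^sub>F y in at x within S. dist ((f y - f x) / (y - x)) 0 < e"
    unfolding eventually_at using \<open>d > 0\<close> by blast
qed

text \<open>Defect of the formula \<open>\<integral>\<^sub>a\<^sup>b h k = h(b) K(b) - \<integral>\<^sub>a\<^sup>b h' K\<close>, \<open>K(s) = \<integral>\<^sub>a\<^sup>s k\<close>.
  As \<open>k\<close> is merely integrable, \<open>K\<close> need not be differentiable and the library's integration
  by parts does not apply. Instead, the second mean value theorem bounds the defect on short
  intervals, so that it has derivative zero as a function of \<open>b\<close>.\<close>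
definition parts_defect :: "(real \<Rightarrow> real) \<Rightarrow> (real \<Rightarrow> real) \<Rightarrow> (real \<Rightarrow> real) \<Rightarrow> real \<Rightarrow> real \<Rightarrow> real"
  where "parts_defect h h' k a b = integral {a..b} (\<lambda>s. h s * k s) - h b * integral {a..b} k
    + integral {a..b} (\<lambda>s. h' s * integral {a..s} k)"

context
  fixes h h' k :: "real \<Rightarrow> real" and a b :: real
  assumes k: "k integrable_on {a..b}"
    and mono: "\<And>x y. a \<le> x \<Longrightarrow> x \<le> y \<Longrightarrow> y \<le> b \<Longrightarrow> h x \<le> h y"
    and deriv: "\<And>x. x \<in> {a..b} \<Longrightarrow> (h has_real_derivative h' x) (at x within {a..b})"
    and cont: "continuous_on {a..b} h'"
begin

lemma parts_integrable:
  assumes "a \<le> x" "x \<le> y" "y \<le> b"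
  shows "k integrable_on {x..y}" "(\<lambda>s. h s * k s) integrable_on {x..y}"
    "continuous_on {x..y} h'" "continuous_on {x..y} (\<lambda>s. integral {x..s} k)"
proof -
  show k': "k integrable_on {x..y}"
    using integrable_subinterval_real[OF k] assms by auto
  have "\<And>u v. x \<le> u \<Longrightarrow> u \<le> v \<Longrightarrow> v \<le> y \<Longrightarrow> h u \<le> h v"
    using mono assms by auto
  then obtain c where "((\<lambda>s. h s * k s) has_integral (h x * integral {x..c} k + h y * integral {c..y} k)) {x..y}"
    using second_mean_value_theorem_full[OF k' \<open>x \<le> y\<close>] by metis
  then show "(\<lambda>s. h s * k s) integrable_on {x..y}" by blast
  show "continuous_on {x..y} h'"
    using cont assms by (auto intro: continuous_on_subset)
  show "continuous_on {x..y} (\<lambda>s. integral {x..s} k)"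
    by (rule indefinite_integral_continuous_1[OF k'])
qed

lemma parts_integral_deriv:
  assumes "a \<le> x" "x \<le> y" "y \<le> b"
  shows "integral {x..y} h' = h y - h x"
proof (rule integral_unique, rule fundamental_theorem_of_calculus[OF \<open>x \<le> y\<close>])
  fix s
  assume "s \<in> {x..y}"
  then have "(h has_real_derivative h' s) (at s within {a..b})"
    using deriv assms by auto
  then have "(h has_real_derivative h' s) (at s within {x..y})"
    by (rule DERIV_subset) (use assms in auto)
  then show "(h has_vector_derivative h' s) (at s within {x..y})"
    by (simp add: has_real_derivative_iff_has_vector_derivative)
qed

lemma parts_integral_split:
  assumes "a \<le> x" "x \<le> s" "s \<le> b"
  shows "integral {x..s} k = integral {a..s} k - integral {a..x} k"
  using Henstock_Kurzweil_Integration.integral_combine[OF assms(1,2) parts_integrable(1)[of a s]] assms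
  by simp

lemma parts_defect_eq:
  assumes "a \<le> x" "x \<le> y" "y \<le> b"
  obtains c where "c \<in> {x..y}"
    and "parts_defect h h' k x y = integral {x..y} (\<lambda>s. h' s * (integral {x..s} k - integral {x..c} k))"
proof -
  note int = parts_integrable[OF assms]
  have "\<And>u v. x \<le> u \<Longrightarrow> u \<le> v \<Longrightarrow> v \<le> y \<Longrightarrow> h u \<le> h v"
    using mono assms by auto
  then obtain c where c: "c \<in> {x..y}"
    and smvt: "integral {x..y} (\<lambda>s. h s * k s) = h x * integral {x..c} k + h y * integral {c..y} k"
    using second_mean_value_theorem[OF int(1) \<open>x \<le> y\<close>] by metis
  have combine: "integral {x..c} k + integral {c..y} k = integral {x..y} k"
    using c by (intro Henstock_Kurzweil_Integration.integral_combine int(1)) auto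
  have "integral {x..y} (\<lambda>s. h' s * (integral {x..s} k - integral {x..c} k)) =
      integral {x..y} (\<lambda>s. h' s * integral {x..s} k) - (h y - h x) * integral {x..c} k"
    using parts_integral_deriv[OF assms]
    by (simp add: right_diff_distrib integral_diff integrable_continuous_real continuous_intros int)
  then have "parts_defect h h' k x y = integral {x..y} (\<lambda>s. h' s * (integral {x..s} k - integral {x..c} k))"
    unfolding parts_defect_def smvt combine[symmetric] by (simp add: algebra_simps)
  with c show ?thesis by (rule that)
qed

lemma parts_defect_bound:
  assumes "a \<le> x" "x \<le> y" "y \<le> b"
    and B: "\<And>s. s \<in> {x..y} \<Longrightarrow> \<bar>h' s\<bar> \<le> B"
    and small: "\<And>s. s \<in> {x..y} \<Longrightarrow> \<bar>integral {x..s} k\<bar> \<le> \<epsilon>"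
  shows "\<bar>parts_defect h h' k x y\<bar> \<le> 2 * B * \<epsilon> * (y - x)"
proof -
  note int = parts_integrable[OF assms(1-3)]
  obtain c where c: "c \<in> {x..y}"
    and eq: "parts_defect h h' k x y = integral {x..y} (\<lambda>s. h' s * (integral {x..s} k - integral {x..c} k))"
    using parts_defect_eq[OF assms(1-3)] by blast
  have "norm (integral {x..y} (\<lambda>s. h' s * (integral {x..s} k - integral {x..c} k)))
      \<le> integral {x..y} (\<lambda>s. B * (2 * \<epsilon>))"
  proof (rule integral_norm_bound_integral)
    show "(\<lambda>s. h' s * (integral {x..s} k - integral {x..c} k)) integrable_on {x..y}"
      by (intro integrable_continuous_real continuous_intros int)
    fix s
    assume s: "s \<in> {x..y}"
    have "\<bar>integral {x..s} k - integral {x..c} k\<bar> \<le> 2 * \<epsilon>"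
      using small[OF s] small[OF c] by linarith
    then show "norm (h' s * (integral {x..s} k - integral {x..c} k)) \<le> B * (2 * \<epsilon>)"
      using B[OF s] by (simp add: abs_mult mult_mono')
  qed (rule integrable_const_ivl)
  then show ?thesis
    using eq \<open>x \<le> y\<close> by (simp add: algebra_simps)
qed

lemma parts_defect_additive:
  assumes "a \<le> x" "x \<le> y" "y \<le> b"
  shows "parts_defect h h' k a y = parts_defect h h' k a x + parts_defect h h' k x y"
proof -
  have ay: "a \<le> y" using assms by linarith
  note int_ay = parts_integrable[OF order.refl ay \<open>y \<le> b\<close>]
  have hk: "integral {a..y} (\<lambda>s. h s * k s) = integral {a..x} (\<lambda>s. h s * k s) + integral {x..y} (\<lambda>s. h s * k s)"
    using assms by (intro Henstock_Kurzweil_Integration.integral_combine[symmetric] int_ay) auto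
  have h'K: "integral {a..y} (\<lambda>s. h' s * integral {a..s} k) =
      integral {a..x} (\<lambda>s. h' s * integral {a..s} k) + integral {x..y} (\<lambda>s. h' s * integral {a..s} k)"
    using assms
    by (intro Henstock_Kurzweil_Integration.integral_combine[symmetric] integrable_continuous_real
        continuous_intros int_ay) auto
  have "integral {x..y} (\<lambda>s. h' s * integral {a..s} k) =
      integral {x..y} (\<lambda>s. h' s * integral {x..s} k + h' s * integral {a..x} k)"
    using assms by (intro integral_cong) (auto simp: parts_integral_split[of x] algebra_simps)
  also have "\<dots> = integral {x..y} (\<lambda>s. h' s * integral {x..s} k) + (h y - h x) * integral {a..x} k"
    using parts_integrable[OF assms] parts_integral_deriv[OF assms]
    by (simp add: integral_add integrable_continuous_real continuous_intros)
  finally have h'K_xy: "integral {x..y} (\<lambda>s. h' s * integral {a..s} k) =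
      integral {x..y} (\<lambda>s. h' s * integral {x..s} k) + (h y - h x) * integral {a..x} k" .
  have k_ay: "integral {a..y} k = integral {a..x} k + integral {x..y} k"
    using parts_integral_split[OF assms] by simp
  show ?thesis
    unfolding parts_defect_def hk h'K h'K_xy k_ay by (simp add: algebra_simps)
qed

lemma parts_defect_locally_small:
  assumes "x \<in> {a..b}" "e > 0"
  obtains d where "d > 0" and "\<And>u v. a \<le> u \<Longrightarrow> u \<le> v \<Longrightarrow> v \<le> b \<Longrightarrow> \<bar>u - x\<bar> < d \<Longrightarrow> \<bar>v - x\<bar> < d \<Longrightarrow>
    \<bar>parts_defect h h' k u v\<bar> \<le> e * (v - u)"
proof -
  define K where "K s = integral {a..s} k" for s
  have "continuous_on {a..b} K"
    unfolding K_def by (rule indefinite_integral_continuous_1[OF k])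
  obtain B where "B > 0" and B: "\<And>s. s \<in> {a..b} \<Longrightarrow> \<bar>h' s\<bar> \<le> B"
    using compact_imp_bounded[OF compact_continuous_image[OF cont compact_Icc]]
    unfolding bounded_pos by auto
  then have "e / (4 * B) > 0"
    using \<open>e > 0\<close> by simp
  then obtain d where "d > 0" and d: "\<forall>y\<in>{a..b}. dist y x < d \<longrightarrow> dist (K y) (K x) < e / (4 * B)"
    using \<open>continuous_on {a..b} K\<close> \<open>x \<in> {a..b}\<close> unfolding continuous_on_iff by blast
  have "\<bar>parts_defect h h' k u v\<bar> \<le> e * (v - u)"
    if uv: "a \<le> u" "u \<le> v" "v \<le> b" "\<bar>u - x\<bar> < d" "\<bar>v - x\<bar> < d" for u v
  proof -
    have "\<bar>integral {u..s} k\<bar> \<le> e / (2 * B)" if "s \<in> {u..v}" for s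
    proof -
      have "\<bar>K s - K x\<bar> < e / (4 * B)" "\<bar>K u - K x\<bar> < e / (4 * B)"
        using d that uv by (auto simp: dist_real_def)
      then show ?thesis
        using that uv by (simp add: parts_integral_split[of u] K_def[symmetric])
    qed
    then have "\<bar>parts_defect h h' k u v\<bar> \<le> 2 * B * (e / (2 * B)) * (v - u)"
      using uv B by (intro parts_defect_bound) auto
    then show ?thesis
      using \<open>B > 0\<close> by simp
  qed
  with \<open>d > 0\<close> show thesis
    by (rule that)
qed

lemma parts_defect_has_derivative_0:
  assumes "x \<in> {a..b}"
  shows "(parts_defect h h' k a has_real_derivative 0) (at x within {a..b})"
proof (rule has_real_derivative_zeroI)
  fix e :: real
  assume "e > 0"
  then obtain d where "d > 0" and small: "\<And>u v. a \<le> u \<Longrightarrow> u \<le> v \<Longrightarrow> v \<le> b \<Longrightarrow> \<bar>u - x\<bar> < d \<Longrightarrow>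
      \<bar>v - x\<bar> < d \<Longrightarrow> \<bar>parts_defect h h' k u v\<bar> \<le> e * (v - u)"
    using parts_defect_locally_small[OF assms] by blast
  have "\<bar>parts_defect h h' k a y - parts_defect h h' k a x\<bar> \<le> e * \<bar>y - x\<bar>"
    if "y \<in> {a..b}" "\<bar>y - x\<bar> < d" for y
  proof (cases "x \<le> y")
    case True
    then show ?thesis
      using assms that \<open>d > 0\<close> small[of x y] by (simp add: parts_defect_additive[of x y])
  next
    case False
    then show ?thesis
      using assms that \<open>d > 0\<close> small[of y x] by (simp add: parts_defect_additive[of y x])
  qed
  with \<open>d > 0\<close> show "\<exists>d>0. \<forall>y\<in>{a..b}. y \<noteq> x \<and> \<bar>y - x\<bar> < d \<longrightarrow>
      \<bar>parts_defect h h' k a y - parts_defect h h' k a x\<bar> \<le> e * \<bar>y - x\<bar>"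
    by blast
qed

theorem integral_by_parts_monotone:
  "integral {a..b} (\<lambda>s. h s * k s) = h b * integral {a..b} k - integral {a..b} (\<lambda>s. h' s * integral {a..s} k)"
proof (cases "a \<le> b")
  case True
  obtain c where "\<And>x. x \<in> {a..b} \<Longrightarrow> parts_defect h h' k a x = c"
    using has_field_derivative_zero_constant[OF convex_real_interval(5) parts_defect_has_derivative_0]
    by blast
  then have "parts_defect h h' k a b = parts_defect h h' k a a"
    using True by auto
  then show ?thesis
    by (simp add: parts_defect_def)
qed (simp add: parts_defect_def)

end

section \<open>Volterra equations and scalar memory kernels\<close>

lemma gronwall_zero:
  fixes u :: "real \<Rightarrow> real"
  assumes cont: "continuous_on {0..T} u" and nn: "\<And>t. t \<in> {0..T} \<Longrightarrow> 0 \<le> u t"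
    and M: "0 \<le> M" and le: "\<And>t. t \<in> {0..T} \<Longrightarrow> u t \<le> M * integral {0..t} u"
    and t: "t \<in> {0..T}"
  shows "u t = 0"
proof -
  define w where "w x = integral {0..x} u" for x
  define z where "z x = w x * exp (- M * x)" for x
  have dw: "(w has_real_derivative u x) (at x within {0..t})" if "x \<in> {0..t}" for x
  proof -
    have "continuous_on {0..t} u" using cont t by (auto intro: continuous_on_subset)
    then show ?thesis unfolding w_def using integral_has_real_derivative that by blast
  qed
  have dz: "(z has_derivative (*) ((u x - M * w x) * exp (- M * x))) (at x within {0..t})"
    if "x \<in> {0..t}" for x
  proof -
    have "(z has_real_derivative (u x * exp (- M * x) + w x * (exp (- M * x) * (- M)))) (at x within {0..t})"
      unfolding z_def
      by (rule derivative_eq_intros dw that | simp)+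
    moreover have "u x * exp (- M * x) + w x * (exp (- M * x) * (- M)) = (u x - M * w x) * exp (- M * x)"
      by (simp add: algebra_simps)
    ultimately show ?thesis by (simp add: has_field_derivative_def)
  qed
  obtain x where x: "x \<in> {0..t}" and eq: "z t - z 0 = ((u x - M * w x) * exp (- M * x)) * t"
    using mvt_very_simple[of 0 t z "\<lambda>x. (*) ((u x - M * w x) * exp (- M * x))"] dz t by auto
  have "x \<in> {0..T}" using x t by auto
  then have "u x - M * w x \<le> 0" using le[of x] unfolding w_def by simp
  then have "((u x - M * w x) * exp (- M * x)) * t \<le> 0" using t
    by (simp add: mult_nonneg_nonpos mult_nonpos_nonneg)
  moreover have "z 0 = 0" by (simp add: z_def w_def)
  ultimately have "z t \<le> 0" using eq by simp
  moreover have "0 \<le> w t" unfolding w_def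
    using t cont nn by (intro integral_nonneg integrable_continuous_real) (auto intro: continuous_on_subset)
  ultimately have "w t = 0" unfolding z_def by (simp add: mult_le_0_iff)
  then have "u t \<le> 0" using le[OF t] unfolding w_def by simp
  then show ?thesis using nn[OF t] by simp
qed

lemma continuous_on_reflect:
  fixes G :: "real \<Rightarrow> real"
  assumes "continuous_on {0..T} G" "t \<in> {0..T}"
  shows "continuous_on {0..t} (\<lambda>s. G (t - s))"
  by (rule continuous_on_compose2[of "{0..T}" G "{0..t}" "\<lambda>s. t - s"])
     (use assms in \<open>auto intro!: continuous_intros\<close>)

lemma volterra_homogeneous_zero:
  fixes \<phi> G :: "real \<Rightarrow> real"
  assumes cphi: "continuous_on {0..T} \<phi>" and cG: "continuous_on {0..T} G"
    and eq: "\<And>t. t \<in> {0..T} \<Longrightarrow> \<phi> t + integral {0..t} (\<lambda>s. G (t - s) * \<phi> s) = 0"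
    and t: "t \<in> {0..T}"
  shows "\<phi> t = 0"
proof -
  obtain M where M: "M > 0" "\<And>x. x \<in> {0..T} \<Longrightarrow> \<bar>G x\<bar> \<le> M"
    using compact_imp_bounded[OF compact_continuous_image[OF cG compact_Icc]]
    unfolding bounded_pos by auto
  have "\<bar>\<phi> t\<bar> = 0"
  proof (rule gronwall_zero[of T "\<lambda>t. \<bar>\<phi> t\<bar>" M])
    show "continuous_on {0..T} (\<lambda>t. \<bar>\<phi> t\<bar>)" by (intro continuous_intros cphi)
    show "0 \<le> M" using M by simp
    show "t \<in> {0..T}" by fact
    fix x assume x: "x \<in> {0..T}"
    show "0 \<le> \<bar>\<phi> x\<bar>" by simp
    have cphix: "continuous_on {0..x} \<phi>" using cphi x by (auto intro: continuous_on_subset)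
    have "\<bar>\<phi> x\<bar> = norm (integral {0..x} (\<lambda>s. G (x - s) * \<phi> s))"
      using eq[OF x] by (simp add: eq_neg_iff_add_eq_0[symmetric])
    also have "\<dots> \<le> integral {0..x} (\<lambda>s. M * \<bar>\<phi> s\<bar>)"
    proof (rule integral_norm_bound_integral)
      show "(\<lambda>s. G (x - s) * \<phi> s) integrable_on {0..x}"
        by (intro integrable_continuous_real continuous_intros continuous_on_reflect[OF cG x] cphix)
      show "(\<lambda>s. M * \<bar>\<phi> s\<bar>) integrable_on {0..x}"
        by (intro integrable_continuous_real continuous_intros cphix)
      fix s assume s: "s \<in> {0..x}"
      then have "\<bar>G (x - s)\<bar> \<le> M" using M(2)[of "x - s"] x by auto
      then show "norm (G (x - s) * \<phi> s) \<le> M * \<bar>\<phi> s\<bar>"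
        by (simp add: abs_mult mult_right_mono)
    qed
    also have "\<dots> = M * integral {0..x} (\<lambda>s. \<bar>\<phi> s\<bar>)" by simp
    finally show "\<bar>\<phi> x\<bar> \<le> M * integral {0..x} (\<lambda>s. \<bar>\<phi> s\<bar>)" .
  qed
  then show ?thesis by simp
qed

lemma volterra_nonneg:
  fixes \<psi> H :: "real \<Rightarrow> real"
  assumes cpsi: "continuous_on {0..T} \<psi>" and cH: "continuous_on {0..T} H"
    and Hnn: "\<And>t. t \<in> {0..T} \<Longrightarrow> 0 \<le> H t"
    and eq: "\<And>t. t \<in> {0..T} \<Longrightarrow> \<psi> t = H t + integral {0..t} (\<lambda>s. H (t - s) * \<psi> s)"
    and t: "t \<in> {0..T}"
  shows "0 \<le> \<psi> t"
proof -
  obtain M where M: "M > 0" "\<And>x. x \<in> {0..T} \<Longrightarrow> \<bar>H x\<bar> \<le> M"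
    using compact_imp_bounded[OF compact_continuous_image[OF cH compact_Icc]]
    unfolding bounded_pos by auto
  define u where "u x = max (- \<psi> x) 0" for x
  have cu: "continuous_on {0..T} u"
    unfolding u_def by (intro continuous_intros cpsi)
  have "u x \<le> M * integral {0..x} u" if x: "x \<in> {0..T}" for x
  proof -
    have cx: "continuous_on {0..x} \<psi>" "continuous_on {0..x} u"
      using cpsi cu x by (auto intro: continuous_on_subset)
    have "- \<psi> x \<le> integral {0..x} (\<lambda>s. H (x - s) * - \<psi> s)"
      using eq[OF x] Hnn[OF x] by (simp add: integral_neg)
    also have "\<dots> \<le> integral {0..x} (\<lambda>s. M * u s)"
    proof (intro integral_le integrable_continuous_real continuous_intros continuous_on_reflect[OF cH x] cx)
      fix s
      assume "s \<in> {0..x}"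
      then have "0 \<le> H (x - s)" "H (x - s) \<le> M"
        using M Hnn x by auto
      moreover have "- \<psi> s \<le> u s" "0 \<le> u s"
        by (auto simp: u_def)
      ultimately show "H (x - s) * - \<psi> s \<le> M * u s"
        using mult_left_mono[of "- \<psi> s" "u s" "H (x - s)"] mult_right_mono[of "H (x - s)" M "u s"]
        by linarith
    qed
    finally have "- \<psi> x \<le> M * integral {0..x} u"
      by simp
    moreover have "0 \<le> integral {0..x} u"
      by (intro integral_nonneg integrable_continuous_real cx) (simp add: u_def)
    ultimately show ?thesis
      using M unfolding u_def[of x] by simp
  qed
  then have "u t = 0"
    using gronwall_zero[OF cu _ less_imp_le[OF M(1)] _ t] by (simp add: u_def)
  then show ?thesis
    by (simp add: u_def)
qed

lemma has_integral_reflect_interval: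
  fixes f :: "real \<Rightarrow> 'a::banach"
  assumes "(f has_integral I) {0..t}"
  shows "((\<lambda>s. f (t - s)) has_integral I) {0..t}"
proof -
  have "((\<lambda>x. f ((-1) *\<^sub>R x + t)) has_integral (1 / \<bar>-1\<bar> ^ DIM(real)) *\<^sub>R I)
      ((\<lambda>x. (1 / (-1)) *\<^sub>R x + - ((1 / (-1)) *\<^sub>R t)) ` cbox 0 t)"
    using assms by (intro has_integral_affinity) auto
  moreover have "(\<lambda>x. (1 / (-1)) *\<^sub>R x + - ((1 / (-1)) *\<^sub>R t)) ` cbox 0 t = {0..t}"
    by (auto simp: image_iff intro!: bexI[where x="t - _"])
  ultimately show ?thesis
    by (simp add: algebra_simps)
qed

context
  fixes \<mu> \<mu>' :: "real \<Rightarrow> real"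
  assumes start: "\<mu> 0 = 1"
    and antimono: "\<And>x y. 0 \<le> x \<Longrightarrow> x \<le> y \<Longrightarrow> \<mu> y \<le> \<mu> x"
    and deriv: "\<And>x. 0 \<le> x \<Longrightarrow> (\<mu> has_real_derivative \<mu>' x) (at x within {0..})"
    and cont: "continuous_on {0..} \<mu>'"
begin

lemma antimono_deriv_nonpos:
  assumes "0 \<le> x"
  shows "\<mu>' x \<le> 0"
proof -
  have "(\<mu> has_real_derivative \<mu>' x) (at x within {x..x+1})"
    using deriv[OF assms] by (rule DERIV_subset) (use assms in auto)
  moreover have "at x within {x..x+1} = at_right x"
    by (rule at_within_Icc_at_right) simp
  ultimately have "((\<lambda>y. (\<mu> y - \<mu> x) / (y - x)) \<longlongrightarrow> \<mu>' x) (at_right x)"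
    by (simp add: has_field_derivative_iff)
  moreover have "\<forall>\<^sub>F y in at_right x. (\<mu> y - \<mu> x) / (y - x) \<le> 0"
    using eventually_at_right_less[of x]
    by eventually_elim (use antimono assms in \<open>auto simp: divide_nonpos_pos\<close>)
  ultimately show ?thesis
    by (simp add: tendsto_upperbound)
qed

lemma convolution_antiderivative_eq:
  assumes "0 \<le> t" and k: "k integrable_on {0..t}"
    and conv: "((\<lambda>\<tau>. \<mu> \<tau> * k (t - \<tau>)) has_integral g) {0..t}"
  shows "integral {0..t} k + integral {0..t} (\<lambda>s. \<mu>' (t - s) * integral {0..s} k) = g"
proof -
  have "((\<lambda>s. \<mu> (t - s)) has_real_derivative - \<mu>' (t - s)) (at s within {0..t})"
    if "s \<in> {0..t}" for s
  proof -
    have "(\<mu> has_real_derivative \<mu>' (t - s)) (at (t - s) within (\<lambda>s. t - s) ` {0..t})"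
      using that by (intro DERIV_subset[OF deriv]) auto
    moreover have "((\<lambda>s. t - s) has_real_derivative -1) (at s within {0..t})"
      by (auto intro!: derivative_eq_intros)
    ultimately show ?thesis
      using DERIV_image_chain by (fastforce simp: o_def)
  qed
  moreover have "continuous_on {0..t} (\<lambda>s. \<mu>' (t - s))"
    using \<open>0 \<le> t\<close> by (intro continuous_on_reflect continuous_on_subset[OF cont]) auto
  ultimately have "integral {0..t} (\<lambda>s. \<mu> (t - s) * k s) =
      \<mu> (t - t) * integral {0..t} k - integral {0..t} (\<lambda>s. - \<mu>' (t - s) * integral {0..s} k)"
    using antimono by (intro integral_by_parts_monotone k) (auto intro!: continuous_intros)
  moreover have "((\<lambda>s. \<mu> (t - s) * k s) has_integral g) {0..t}"
    using has_integral_reflect_interval[OF conv] by simp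
  ultimately show ?thesis
    by (simp add: integral_unique start integral_neg)
qed

lemma integral_eq_0_if_convolution_eq_0:
  assumes k: "\<And>t. 0 \<le> t \<Longrightarrow> k integrable_on {0..t}"
    and conv: "\<And>t. 0 \<le> t \<Longrightarrow> ((\<lambda>\<tau>. \<mu> \<tau> * k (t - \<tau>)) has_integral 0) {0..t}"
    and "0 \<le> t"
  shows "integral {0..t} k = 0"
proof (rule volterra_homogeneous_zero[where \<phi>="\<lambda>x. integral {0..x} k" and T=t])
  show "continuous_on {0..t} (\<lambda>x. integral {0..x} k)"
    by (rule indefinite_integral_continuous_1[OF k[OF \<open>0 \<le> t\<close>]])
  show "continuous_on {0..t} \<mu>'"
    using cont by (rule continuous_on_subset) auto
  show "integral {0..x} k + integral {0..x} (\<lambda>s. \<mu>' (x - s) * integral {0..s} k) = 0"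
    if "x \<in> {0..t}" for x
    using that by (intro convolution_antiderivative_eq k conv) auto
qed (use \<open>0 \<le> t\<close> in auto)

text \<open>By \<open>convolution_antiderivative_eq\<close>, \<open>K(t) = \<integral>\<^sub>0\<^sup>t k\<close> solves the Volterra equation
  \<open>-K = -\<mu>' + (-\<mu>') \<star> (-K)\<close>, whose kernel and forcing term are nonnegative.\<close>
lemma memory_kernel_integral_nonpos:
  assumes k: "\<And>t. 0 \<le> t \<Longrightarrow> k integrable_on {0..t}"
    and conv: "\<And>t. 0 \<le> t \<Longrightarrow> ((\<lambda>\<tau>. \<mu> \<tau> * k (t - \<tau>)) has_integral \<mu>' t) {0..t}"
    and "0 \<le> t"
  shows "integral {0..t} k \<le> 0"
proof -
  have "0 \<le> - integral {0..t} k"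
  proof (rule volterra_nonneg[where \<psi>="\<lambda>x. - integral {0..x} k" and H="\<lambda>x. - \<mu>' x" and T=t])
    show "continuous_on {0..t} (\<lambda>x. - integral {0..x} k)"
      by (intro continuous_intros indefinite_integral_continuous_1[OF k[OF \<open>0 \<le> t\<close>]])
    show "continuous_on {0..t} (\<lambda>x. - \<mu>' x)"
      using cont by (intro continuous_intros) (rule continuous_on_subset, auto)
    show "0 \<le> - \<mu>' x" if "x \<in> {0..t}" for x
      using antimono_deriv_nonpos that by auto
    show "- integral {0..x} k = - \<mu>' x + integral {0..x} (\<lambda>s. - \<mu>' (x - s) * - integral {0..s} k)"
      if "x \<in> {0..t}" for x
      using convolution_antiderivative_eq[OF _ k conv, of x] that by auto
  qed (use \<open>0 \<le> t\<close> in auto)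
  then show ?thesis
    by simp
qed

end

section \<open>Pauli-diagonal dynamics and the reduced kernel\<close>

lemma at_within_atLeast_eq:
  fixes x :: real
  assumes "a \<le> x" "x < b"
  shows "at x within {a..} = at x within {a..b}"
  by (rule at_within_nhd[where S="{..<b}"]) (use assms in auto)

lemma continuous_on_indefinite_integral_atLeast:
  fixes f :: "real \<Rightarrow> 'a::banach"
  assumes "\<And>t. 0 \<le> t \<Longrightarrow> f integrable_on {0..t}"
  shows "continuous_on {0..} (\<lambda>t. integral {0..t} f)"
proof (clarsimp simp: continuous_on_eq_continuous_within)
  fix x :: real
  assume "0 \<le> x"
  then have "continuous_on {0..x+1} (\<lambda>t. integral {0..t} f)"
    by (intro indefinite_integral_continuous_1 assms) simp
  then show "continuous (at x within {0..}) (\<lambda>t. integral {0..t} f)"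
    using \<open>0 \<le> x\<close> by (simp add: at_within_atLeast_eq[of 0 x "x+1"] continuous_on_eq_continuous_within)
qed

lemma integral_has_real_derivative_atLeast:
  assumes "continuous_on {0..} d" "0 \<le> x"
  shows "((\<lambda>t. integral {0..t} d) has_real_derivative d x) (at x within {0..})"
proof -
  have "at x within {0..} = at x within {0..x+1}"
    using assms(2) by (rule at_within_atLeast_eq) simp
  moreover have "continuous_on {0..x+1} d"
    using assms(1) by (rule continuous_on_subset) auto
  ultimately show ?thesis
    using integral_has_real_derivative[of 0 "x+1" d x] assms(2) by simp
qed

lemma eigencoordinate_solution:
  fixes f f' :: "real \<Rightarrow> 'a::real_normed_vector" and \<phi> :: "'a \<Rightarrow> complex"
  assumes \<phi>: "bounded_linear \<phi>"
    and ode: "\<And>t. 0 \<le> t \<Longrightarrow> (f has_vector_derivative f' t) (at t within {0..})"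
    and eigen: "\<And>t. 0 \<le> t \<Longrightarrow> \<phi> (f' t) = of_real (d t) * \<phi> (f t)"
    and d: "continuous_on {0..} d"
    and "0 \<le> t"
  shows "\<phi> (f t) = \<phi> (f 0) * of_real (exp (integral {0..t} d))"
proof -
  define g where "g x = \<phi> (f x) * of_real (exp (- integral {0..x} d))" for x
  have "(g has_vector_derivative 0) (at x within {0..t})" if "x \<in> {0..t}" for x
  proof -
    have "((\<lambda>x. \<phi> (f x)) has_vector_derivative \<phi> (f' x)) (at x within {0..})"
      using that by (intro bounded_linear.has_vector_derivative[OF \<phi> ode]) auto
    moreover have "((\<lambda>x. exp (- integral {0..x} d)) has_real_derivative
        exp (- integral {0..x} d) * - d x) (at x within {0..})"
      using integral_has_real_derivative_atLeast[OF d, of x] that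
      by (auto intro!: derivative_eq_intros)
    ultimately have "(g has_vector_derivative
        \<phi> (f x) * of_real (exp (- integral {0..x} d) * - d x) + \<phi> (f' x) * of_real (exp (- integral {0..x} d)))
        (at x within {0..})"
      unfolding g_def by (intro has_vector_derivative_mult has_vector_derivative_of_real)
    then show ?thesis
      using eigen[of x] that
      by (auto simp: algebra_simps intro: has_vector_derivative_within_subset)
  qed
  then obtain c where "\<And>x. x \<in> {0..t} \<Longrightarrow> g x = c"
    using has_vector_derivative_zero_constant[of "{0..t}" g] by auto
  then have "g t = g 0"
    using \<open>0 \<le> t\<close> by auto
  then have "\<phi> (f t) * of_real (exp (- integral {0..t} d)) * of_real (exp (integral {0..t} d)) =
      \<phi> (f 0) * of_real (exp (integral {0..t} d))"
    by (simp add: g_def)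
  then show ?thesis
    by (simp add: mult.assoc exp_minus field_simps)
qed

definition generated_eigenvalue :: "(nat \<Rightarrow> real \<Rightarrow> real) \<Rightarrow> nat \<Rightarrow> real \<Rightarrow> real" where
  "generated_eigenvalue d b t = exp (integral {0..t} (d b))"

lemma generated_eigenvalue_0 [simp]: "generated_eigenvalue d b 0 = 1"
  by (simp add: generated_eigenvalue_def)

lemma generated_eigenvalue_pos: "0 < generated_eigenvalue d b t"
  by (simp add: generated_eigenvalue_def)

lemma generated_eigenvalue_trace:
  assumes "\<And>t. 0 \<le> t \<Longrightarrow> d 0 t = 0" "0 \<le> t"
  shows "generated_eigenvalue d 0 t = 1"
proof -
  have "integral {0..t} (d 0) = integral {0..t} (\<lambda>_. 0)"
    using assms by (intro integral_cong) auto
  then show ?thesis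
    by (simp add: generated_eigenvalue_def)
qed

lemma generated_eigenvalue_has_real_derivative:
  assumes "continuous_on {0..} (d b)" "0 \<le> x"
  shows "(generated_eigenvalue d b has_real_derivative d b x * generated_eigenvalue d b x) (at x within {0..})"
  unfolding generated_eigenvalue_def[abs_def]
  using integral_has_real_derivative_atLeast[OF assms] by (auto intro!: derivative_eq_intros)

lemma continuous_on_generated_eigenvalue:
  assumes "continuous_on {0..} (d b)"
  shows "continuous_on {0..} (generated_eigenvalue d b)"
  unfolding generated_eigenvalue_def[abs_def]
  by (intro continuous_intros continuous_on_indefinite_integral_atLeast integrable_continuous_real
      continuous_on_subset[OF assms]) auto

lemma generated_eigenvalue_antimono:
  assumes cont: "continuous_on {0..} (d b)" and nonpos: "\<And>x. 0 \<le> x \<Longrightarrow> d b x \<le> 0"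
    and "0 \<le> s" "s \<le> t"
  shows "generated_eigenvalue d b t \<le> generated_eigenvalue d b s"
proof -
  have int: "d b integrable_on {0..t}"
    by (intro integrable_continuous_real continuous_on_subset[OF cont]) auto
  have "integral {0..s} (d b) + integral {s..t} (d b) = integral {0..t} (d b)"
    using assms by (intro Henstock_Kurzweil_Integration.integral_combine int) auto
  moreover have "integral {s..t} (d b) \<le> integral {s..t} (\<lambda>_. 0)"
    using assms integrable_subinterval_real[OF int, of s t] by (intro integral_le) auto
  ultimately show ?thesis
    by (simp add: generated_eigenvalue_def)
qed

lemma pauli_diag_solution:
  assumes init: "\<Lambda> 0 = id"
    and ode: "\<And>\<rho> t. 0 \<le> t \<Longrightarrow>
        ((\<lambda>s. \<Lambda> s \<rho>) has_vector_derivative pauli_diag (\<lambda>b. d b t) (\<Lambda> t \<rho>)) (at t within {0..})"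
    and cont: "\<And>b. continuous_on {0..} (d b)"
    and "0 \<le> t"
  shows "\<Lambda> t = pauli_diag (\<lambda>b. generated_eigenvalue d b t)"
proof (intro ext qop_eqI_pauli_coord)
  fix \<rho> and b :: nat
  assume "b \<le> 3"
  have "pauli_coord b (\<Lambda> t \<rho>) = pauli_coord b (\<Lambda> 0 \<rho>) * of_real (exp (integral {0..t} (d b)))"
    using \<open>b \<le> 3\<close> \<open>0 \<le> t\<close>
    by (intro eigencoordinate_solution[OF bounded_linear_pauli_coord ode[where \<rho>=\<rho>] _ cont])
      (simp_all add: pauli_coord_pauli_diag)
  then show "pauli_coord b (\<Lambda> t \<rho>) = pauli_coord b (pauli_diag (\<lambda>b. generated_eigenvalue d b t) \<rho>)"
    using \<open>b \<le> 3\<close> by (simp add: init pauli_coord_pauli_diag generated_eigenvalue_def mult.commute)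
qed

context
  fixes \<Lambda> :: "real \<Rightarrow> qmap" and d :: "nat \<Rightarrow> real \<Rightarrow> real"
  assumes init: "\<Lambda> 0 = id"
    and ode: "\<And>\<rho> t. 0 \<le> t \<Longrightarrow>
        ((\<lambda>s. \<Lambda> s \<rho>) has_vector_derivative pauli_diag (\<lambda>b. d b t) (\<Lambda> t \<rho>)) (at t within {0..})"
    and cont: "\<And>b. continuous_on {0..} (d b)"
    and trace: "\<And>t. 0 \<le> t \<Longrightarrow> d 0 t = 0"
begin

lemma generated_eigenvalue_antimono_if_P_divisible:
  assumes "P_divisible \<Lambda>" "b \<le> 3" "0 \<le> s" "s \<le> t"
  shows "generated_eigenvalue d b t \<le> generated_eigenvalue d b s"
proof (cases "b = 0")
  case False
  then have "b \<in> {1,2,3}"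
    using \<open>b \<le> 3\<close> by auto
  with assms(1,3,4) show ?thesis
    by (intro antimono_if_P_divisible_pauli_diag[OF pauli_diag_solution[OF init ode cont]])
      (simp_all add: generated_eigenvalue_trace trace generated_eigenvalue_pos)
qed (use assms generated_eigenvalue_trace[of d, OF trace] in auto)

lemma P_divisible_if_pauli_generator_nonpos:
  assumes "\<And>k t. k \<in> {1,2,3} \<Longrightarrow> 0 \<le> t \<Longrightarrow> d k t \<le> 0"
  shows "P_divisible \<Lambda>"
  using assms
  by (intro P_divisible_pauli_diag[OF pauli_diag_solution[OF init ode cont]])
    (auto simp: generated_eigenvalue_trace trace generated_eigenvalue_pos intro!: generated_eigenvalue_antimono cont)

end

lemma memory_kernel_has_integral:
  assumes "0 \<le> t"
    and "(\<lambda>\<tau>. K (t - \<tau>) (\<Lambda> \<tau> \<rho>)) integrable_on {0..t}"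
    and "((\<lambda>s. \<Lambda> s \<rho>) has_vector_derivative integral {0..t} (\<lambda>\<tau>. K (t - \<tau>) (\<Lambda> \<tau> \<rho>))) (at t within {0..})"
    and "((\<lambda>s. \<Lambda> s \<rho>) has_vector_derivative L t (\<Lambda> t \<rho>)) (at t within {0..})"
  shows "((\<lambda>\<tau>. K (t - \<tau>) (\<Lambda> \<tau> \<rho>)) has_integral L t (\<Lambda> t \<rho>)) {0..t}"
proof -
  have "at_right t \<le> at t within {0..}"
    using \<open>0 \<le> t\<close> by (intro at_le) auto
  then have "at t within {0..} \<noteq> bot"
    by (metis bot.extremum_uniqueI trivial_limit_at_right_real)
  then have "integral {0..t} (\<lambda>\<tau>. K (t - \<tau>) (\<Lambda> \<tau> \<rho>)) = L t (\<Lambda> t \<rho>)"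
    using assms(3,4) by (rule vector_derivative_unique_within)
  then show ?thesis
    using assms(2) by (metis integrable_integral)
qed

lemma pauli_diag_memory_kernel_has_integral:
  assumes \<Lambda>: "\<And>t. 0 \<le> t \<Longrightarrow> \<Lambda> t = pauli_diag (\<lambda>b. \<mu> b t)"
    and ode: "((\<lambda>s. \<Lambda> s \<rho>) has_vector_derivative pauli_diag (\<lambda>b. d b t) (\<Lambda> t \<rho>)) (at t within {0..})"
    and NZ: "(\<lambda>\<tau>. K (t - \<tau>) (\<Lambda> \<tau> \<rho>)) integrable_on {0..t} \<and>
      ((\<lambda>s. \<Lambda> s \<rho>) has_vector_derivative integral {0..t} (\<lambda>\<tau>. K (t - \<tau>) (\<Lambda> \<tau> \<rho>))) (at t within {0..})"
    and "0 \<le> t"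
  shows "((\<lambda>\<tau>. K (t - \<tau>) (pauli_diag (\<lambda>b. \<mu> b \<tau>) \<rho>)) has_integral pauli_diag (\<lambda>b. d b t * \<mu> b t) \<rho>) {0..t}"
proof -
  have "((\<lambda>\<tau>. K (t - \<tau>) (\<Lambda> \<tau> \<rho>)) has_integral pauli_diag (\<lambda>b. d b t) (\<Lambda> t \<rho>)) {0..t}"
    using NZ ode \<open>0 \<le> t\<close> by (intro memory_kernel_has_integral) auto
  moreover have "pauli_diag (\<lambda>b. d b t) (\<Lambda> t \<rho>) = pauli_diag (\<lambda>b. d b t * \<mu> b t) \<rho>"
    using \<open>0 \<le> t\<close> by (simp add: \<Lambda> pauli_diag_pauli_diag)
  moreover have "K (t - \<tau>) (\<Lambda> \<tau> \<rho>) = K (t - \<tau>) (pauli_diag (\<lambda>b. \<mu> b \<tau>) \<rho>)" if "\<tau> \<in> {0..t}" for \<tau>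
    using that by (simp add: \<Lambda>)
  ultimately show ?thesis
    by (metis (no_types, lifting) has_integral_eq)
qed

text \<open>\<open>conv\<close> is the Nakajima-Zwanzig equation \<open>\<Lambda>\<^sub>t' = \<integral>\<^sub>0\<^sup>t K\<^sub>t\<^sub>-\<^sub>\<tau> \<Lambda>\<^sub>\<tau> d\<tau>\<close> of the
  Pauli-diagonal dynamics with eigenvalues \<open>\<mu>\<close>.\<close>
locale pauli_memory_kernel =
  fixes \<mu> \<mu>' :: "nat \<Rightarrow> real \<Rightarrow> real" and K :: "real \<Rightarrow> qmap"
  assumes start: "\<And>b. \<mu> b 0 = 1"
    and antimono: "\<And>b x y. b \<le> 3 \<Longrightarrow> 0 \<le> x \<Longrightarrow> x \<le> y \<Longrightarrow> \<mu> b y \<le> \<mu> b x"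
    and deriv: "\<And>b x. 0 \<le> x \<Longrightarrow> (\<mu> b has_real_derivative \<mu>' b x) (at x within {0..})"
    and deriv_cont: "\<And>b. continuous_on {0..} (\<mu>' b)"
    and deriv_trace: "\<And>x. \<mu>' 0 x = 0"
    and K_lin: "\<And>\<tau>. 0 \<le> \<tau> \<Longrightarrow> qlinear (K \<tau>)"
    and K_int: "\<And>\<rho> t. 0 \<le> t \<Longrightarrow> (\<lambda>\<tau>. K \<tau> \<rho>) integrable_on {0..t}"
    and conv: "\<And>\<rho> t. 0 \<le> t \<Longrightarrow>
      ((\<lambda>\<tau>. K (t - \<tau>) (pauli_diag (\<lambda>b. \<mu> b \<tau>) \<rho>)) has_integral pauli_diag (\<lambda>b. \<mu>' b t) \<rho>) {0..t}"
begin

definition kernel_coord :: "nat \<Rightarrow> nat \<Rightarrow> real \<Rightarrow> complex" where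
  "kernel_coord a b \<tau> = pauli_coord b (K \<tau> (pauli a))"

text \<open>The imaginary part integrates to zero, see \<open>integral_Im_kernel_coord\<close>.\<close>
definition KRed_eigenvalue :: "nat \<Rightarrow> real \<Rightarrow> real" where
  "KRed_eigenvalue b t = integral {0..t} (\<lambda>\<tau>. Re (kernel_coord b b \<tau>))"

lemma kernel_coord_integrable: "0 \<le> t \<Longrightarrow> kernel_coord a b integrable_on {0..t}"
  unfolding kernel_coord_def
  by (rule integrable_linear[OF K_int bounded_linear_pauli_coord, unfolded o_def])

lemma kernel_coord_convolution:
  assumes "a \<le> 3" "b \<le> 3" "0 \<le> t"
  shows "((\<lambda>\<tau>. of_real (\<mu> a \<tau>) * kernel_coord a b (t - \<tau>)) has_integral
      of_real (if b = a then \<mu>' a t else 0)) {0..t}"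
proof -
  have integral: "((\<lambda>\<tau>. pauli_coord b (K (t - \<tau>) (pauli_diag (\<lambda>b. \<mu> b \<tau>) (pauli a)))) has_integral
      pauli_coord b (pauli_diag (\<lambda>b. \<mu>' b t) (pauli a))) {0..t}"
    using has_integral_linear[OF conv[OF \<open>0 \<le> t\<close>] bounded_linear_pauli_coord] by (simp add: o_def)
  have integrand: "pauli_coord b (K (t - \<tau>) (pauli_diag (\<lambda>b. \<mu> b \<tau>) (pauli a))) =
      of_real (\<mu> a \<tau>) * kernel_coord a b (t - \<tau>)" if "\<tau> \<in> {0..t}" for \<tau>
    using that assms by (simp add: pauli_diag_pauli qlinear_scaleR K_lin pauli_coord_scaleR kernel_coord_def)
  have "pauli_coord b (pauli_diag (\<lambda>b. \<mu>' b t) (pauli a)) = of_real (if b = a then \<mu>' a t else 0)"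
    using assms by (simp add: pauli_diag_pauli pauli_coord_scaleR pauli_coord_pauli)
  then show ?thesis
    using has_integral_eq[OF integrand integral] by simp
qed

lemma kernel_coord_Re_Im_convolution:
  assumes "a \<le> 3" "b \<le> 3" "0 \<le> t"
  shows "((\<lambda>\<tau>. \<mu> a \<tau> * Re (kernel_coord a b (t - \<tau>))) has_integral (if b = a then \<mu>' a t else 0)) {0..t}"
    and "((\<lambda>\<tau>. \<mu> a \<tau> * Im (kernel_coord a b (t - \<tau>))) has_integral 0) {0..t}"
  using has_integral_linear[OF kernel_coord_convolution[OF assms] bounded_linear_Re]
    has_integral_linear[OF kernel_coord_convolution[OF assms] bounded_linear_Im]
  by (simp_all add: o_def)

lemma kernel_coord_Re_Im_integrable:
  assumes "0 \<le> t"
  shows "(\<lambda>\<tau>. Re (kernel_coord a b \<tau>)) integrable_on {0..t}"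
    and "(\<lambda>\<tau>. Im (kernel_coord a b \<tau>)) integrable_on {0..t}"
  using integrable_linear[OF kernel_coord_integrable[OF assms] bounded_linear_Re]
    integrable_linear[OF kernel_coord_integrable[OF assms] bounded_linear_Im]
  by (simp_all add: o_def)

lemma integral_Im_kernel_coord:
  assumes "a \<le> 3" "b \<le> 3" "0 \<le> t"
  shows "integral {0..t} (\<lambda>\<tau>. Im (kernel_coord a b \<tau>)) = 0"
  using start antimono[OF \<open>a \<le> 3\<close>] deriv deriv_cont kernel_coord_Re_Im_integrable(2)
    kernel_coord_Re_Im_convolution(2)[OF assms(1,2)] \<open>0 \<le> t\<close>
  by (rule integral_eq_0_if_convolution_eq_0)

lemma integral_Re_kernel_coord:
  assumes "a \<le> 3" "b \<le> 3" "0 \<le> t" "b \<noteq> a \<or> a = 0"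
  shows "integral {0..t} (\<lambda>\<tau>. Re (kernel_coord a b \<tau>)) = 0"
proof (rule integral_eq_0_if_convolution_eq_0[OF start antimono[OF \<open>a \<le> 3\<close>] deriv deriv_cont
      kernel_coord_Re_Im_integrable(1) _ \<open>0 \<le> t\<close>])
  fix t' :: real
  assume "0 \<le> t'"
  have "(if b = a then \<mu>' a t' else 0) = 0"
    using assms(4) deriv_trace by auto
  then show "((\<lambda>\<tau>. \<mu> a \<tau> * Re (kernel_coord a b (t' - \<tau>))) has_integral 0) {0..t'}"
    using kernel_coord_Re_Im_convolution(1)[OF assms(1,2) \<open>0 \<le> t'\<close>] by simp
qed

lemma integral_kernel_coord:
  assumes "a \<le> 3" "b \<le> 3" "0 \<le> t"
  shows "integral {0..t} (kernel_coord a b) = of_real (if b = a then KRed_eigenvalue a t else 0)"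
proof -
  have "Re (integral {0..t} (kernel_coord a b)) = integral {0..t} (\<lambda>\<tau>. Re (kernel_coord a b \<tau>))"
    "Im (integral {0..t} (kernel_coord a b)) = integral {0..t} (\<lambda>\<tau>. Im (kernel_coord a b \<tau>))"
    using integral_linear[OF kernel_coord_integrable[OF \<open>0 \<le> t\<close>] bounded_linear_Re]
      integral_linear[OF kernel_coord_integrable[OF \<open>0 \<le> t\<close>] bounded_linear_Im]
    by (simp_all add: o_def)
  then show ?thesis
    using integral_Re_kernel_coord[OF assms] integral_Im_kernel_coord[OF assms]
    by (auto simp: complex_eq_iff KRed_eigenvalue_def)
qed

lemma KRed_eigenvalue_nonpos:
  assumes "b \<le> 3" "0 \<le> t"
  shows "KRed_eigenvalue b t \<le> 0"
  unfolding KRed_eigenvalue_def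
proof (rule memory_kernel_integral_nonpos[of "\<mu> b" "\<mu>' b"])
  show "((\<lambda>\<tau>. \<mu> b \<tau> * Re (kernel_coord b b (t' - \<tau>))) has_integral \<mu>' b t') {0..t'}" if "0 \<le> t'" for t'
    using kernel_coord_Re_Im_convolution(1)[OF assms(1,1) that] by simp
qed (use start antimono deriv deriv_cont kernel_coord_Re_Im_integrable(1) assms in auto)

lemma KRed_eigenvalue_trace: "0 \<le> t \<Longrightarrow> KRed_eigenvalue 0 t = 0"
  unfolding KRed_eigenvalue_def by (rule integral_Re_kernel_coord) simp_all

lemma continuous_on_KRed_eigenvalue: "continuous_on {0..} (KRed_eigenvalue b)"
  unfolding KRed_eigenvalue_def
  by (intro continuous_on_indefinite_integral_atLeast integrable_linear[OF kernel_coord_integrable bounded_linear_Re, unfolded o_def])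

lemma KRed_eq_pauli_diag:
  assumes "0 \<le> t"
  shows "KRed K t = pauli_diag (\<lambda>b. KRed_eigenvalue b t)"
proof (intro ext qop_eqI_pauli_coord)
  fix \<rho> and b :: nat
  assume "b \<le> 3"
  have "pauli_coord b (KRed K t \<rho>) = integral {0..t} (\<lambda>\<tau>. pauli_coord b (K \<tau> \<rho>))"
    unfolding KRed_def using integral_linear[OF K_int[OF assms] bounded_linear_pauli_coord]
    by (simp add: o_def)
  also have "\<dots> = integral {0..t} (\<lambda>\<tau>. \<Sum>a\<le>3. pauli_coord a \<rho> * kernel_coord a b \<tau>)"
    by (intro integral_cong) (simp add: pauli_coord_qlinear K_lin kernel_coord_def)
  also have "\<dots> = (\<Sum>a\<le>3. pauli_coord a \<rho> * integral {0..t} (kernel_coord a b))"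
    using kernel_coord_integrable[OF assms]
    by (subst integral_sum) (simp_all add: integrable_on_mult_right)
  also have "\<dots> = of_real (KRed_eigenvalue b t) * pauli_coord b \<rho>"
    using le_3_cases[OF \<open>b \<le> 3\<close>] assms by (auto simp: integral_kernel_coord atMost_3)
  finally show "pauli_coord b (KRed K t \<rho>) = pauli_coord b (pauli_diag (\<lambda>b. KRed_eigenvalue b t) \<rho>)"
    using \<open>b \<le> 3\<close> by (simp add: pauli_coord_pauli_diag)
qed

end

lemma continuous_on_mTCL:
  assumes "\<forall>k\<in>{1,2,3}. continuous_on S (\<gamma> k)"
  shows "continuous_on S (mTCL \<gamma> b)"
proof -
  have "mTCL \<gamma> b = (if b = 1 then (\<lambda>t. - (\<gamma> 2 t + \<gamma> 3 t)) else if b = 2 then (\<lambda>t. - (\<gamma> 1 t + \<gamma> 3 t))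
      else if b = 3 then (\<lambda>t. - (\<gamma> 1 t + \<gamma> 2 t)) else (\<lambda>t. 0))"
    by (auto simp: mTCL_def fun_eq_iff)
  then show ?thesis
    using assms by (auto intro!: continuous_intros)
qed

theorem corollary3:
  fixes \<gamma> :: "nat \<Rightarrow> real \<Rightarrow> real"
    and \<Lambda> \<Lambda>Red K :: "real \<Rightarrow> qmap"
  assumes rates_cont: "\<forall>k\<in>{1,2,3}. continuous_on {0..} (\<gamma> k)"
    and \<Lambda>_init: "\<Lambda> 0 = id"
    and TCL: "\<forall>\<rho> t. 0 \<le> t \<longrightarrow>
        ((\<lambda>s. \<Lambda> s \<rho>) has_vector_derivative LTCL \<gamma> t (\<Lambda> t \<rho>)) (at t within {0..})"
    and K_lin: "\<forall>\<tau>. 0 \<le> \<tau> \<longrightarrow> qlinear (K \<tau>)"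
    and K_int: "\<forall>\<rho> t. 0 \<le> t \<longrightarrow> (\<lambda>\<tau>. K \<tau> \<rho>) integrable_on {0..t}"
    and NZ: "\<forall>\<rho> t. 0 \<le> t \<longrightarrow>
        (\<lambda>\<tau>. K (t - \<tau>) (\<Lambda> \<tau> \<rho>)) integrable_on {0..t} \<and>
        ((\<lambda>s. \<Lambda> s \<rho>) has_vector_derivative
            integral {0..t} (\<lambda>\<tau>. K (t - \<tau>) (\<Lambda> \<tau> \<rho>))) (at t within {0..})"
    and Laplace: "\<forall>\<alpha>\<in>{0,1,2,3}. \<forall>u>0.
        (\<lambda>t. exp (- u * t) * Gfun \<gamma> \<alpha> t) integrable_on {0..} \<and>
        \<bar>laplace (Gfun \<gamma> \<alpha>) u\<bar> < 1"
    and Red_init: "\<Lambda>Red 0 = id"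
    and Red_eq: "\<forall>\<rho> t. 0 \<le> t \<longrightarrow>
        ((\<lambda>s. \<Lambda>Red s \<rho>) has_vector_derivative KRed K t (\<Lambda>Red t \<rho>)) (at t within {0..})"
    and Pdiv: "P_divisible \<Lambda>"
  shows "P_divisible \<Lambda>Red"
proof -
  have m_cont: "continuous_on {0..} (mTCL \<gamma> b)" for b
    using rates_cont by (rule continuous_on_mTCL)
  have m_trace: "mTCL \<gamma> 0 t = 0" for t
    by (simp add: mTCL_def)
  have TCL': "((\<lambda>s. \<Lambda> s \<rho>) has_vector_derivative pauli_diag (\<lambda>b. mTCL \<gamma> b t) (\<Lambda> t \<rho>)) (at t within {0..})"
    if "0 \<le> t" for \<rho> t
    using TCL that by (simp add: LTCL_eq_pauli_diag)
  let ?\<mu> = "generated_eigenvalue (mTCL \<gamma>)"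
  have \<Lambda>_eq: "\<Lambda> t = pauli_diag (\<lambda>b. ?\<mu> b t)" if "0 \<le> t" for t
    using \<Lambda>_init TCL' m_cont that by (rule pauli_diag_solution)
  interpret pauli_memory_kernel ?\<mu> "\<lambda>b t. mTCL \<gamma> b t * ?\<mu> b t" K
  proof
    show "?\<mu> b y \<le> ?\<mu> b x" if "b \<le> 3" "0 \<le> x" "x \<le> y" for b x y
      using \<Lambda>_init TCL' m_cont m_trace Pdiv that by (rule generated_eigenvalue_antimono_if_P_divisible)
    show "((\<lambda>\<tau>. K (t - \<tau>) (pauli_diag (\<lambda>b. ?\<mu> b \<tau>) \<rho>)) has_integral
        pauli_diag (\<lambda>b. mTCL \<gamma> b t * ?\<mu> b t) \<rho>) {0..t}" if "0 \<le> t" for \<rho> t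
      using NZ that by (intro pauli_diag_memory_kernel_has_integral[OF \<Lambda>_eq TCL']) auto
  qed (use m_cont m_trace K_lin K_int in \<open>auto simp: generated_eigenvalue_has_real_derivative
      intro!: continuous_intros continuous_on_generated_eigenvalue\<close>)
  show ?thesis
    using Red_init Red_eq continuous_on_KRed_eigenvalue KRed_eigenvalue_trace KRed_eigenvalue_nonpos
    by (intro P_divisible_if_pauli_generator_nonpos[where d=KRed_eigenvalue]) (auto simp: KRed_eq_pauli_diag)
qed

end
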